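(* Let $C=p_r\dots p_s$ be a configuration of g-2PATH satisfying the condition of noninterference of extensions (CNI). Then (1) if $(i,j)\in K$ and $i+1\le 0$, then $V(i,j)=V(i+1,j)$; and (2) if $(i,j)\in K$ and $0\le j-1$, then $U(i,j)=U(i,j-1)$.
   Context: Positions are elements of $\mathbb{Z}^2$; with $\epsilon_0=(1,0),\epsilon_1=(0,1),\epsilon_2=(-1,0),\epsilon_3=(0,-1)$, positions $p,p'$ are adjacent if $p'-p$ is some $\epsilon_i$. A configuration of g-2PATH is a sequence $C=p_r\dots p_s$ ($r\le0\le s$) of positions with $p_0=(0,0)$, consecutive positions adjacent, all positions distinct, and $p_l,p_m$ not adjacent whenever $|l-m|\ge2$. For $p\in C$, $\mathrm{bc}_C(p)=(b_0,\dots,b_3)$ with $b_i=1$ iff $p+\epsilon_i\in C$. For fixed $C$ and $r\le i\le0\le j\le s$: $W(i,j)$ is the set of pairs $(x_0,x_1)$ of finite, possibly empty, sequences of positions such that $x_0p_i\dots p_jx_1$ is a configuration $C'$ of g-2PATH (with general at $p_0$) with $\mathrm{bc}_{C'}(p_l)=\mathrm{bc}_C(p_l)$ for all $i\le l\le j$; $U(i,j)$ and $V(i,j)$ are the sets of first, respectively second, components of elements of $W(i,j)$. $\mathrm{NI}(i,j)$ is the statement $W(i,j)=U(i,j)\times V(i,j)$. Define $I=\{(i,j): r\le i-1,\ W(i,j)\text{ infinite},\ W(i-1,j)\text{ finite}\}$, $J=\{(i,j): j+1\le s,\ W(i,j)\text{ infinite},\ W(i,j+1)\text{ finite}\}$,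 $K=\{(i,j): W(i,j)\text{ finite}\}$ (all with $r\le i\le0\le j\le s$). $C$ satisfies CNI if $\mathrm{NI}(i,j)$ holds for every $(i,j)\in I\cup J\cup K$. *)

theory Defs
  imports Main
begin

type_synonym pos = "int \<times> int"

definition eps :: "nat \<Rightarrow> pos" where
  "eps k = (if k = 0 then (1,0) else if k = 1 then (0,1) else if k = 2 then (-1,0) else (0,-1))"

definition padd :: "pos \<Rightarrow> pos \<Rightarrow> pos" where
  "padd a b = (fst a + fst b, snd a + snd b)"

definition adjacent :: "pos \<Rightarrow> pos \<Rightarrow> bool" where
  "adjacent p q \<longleftrightarrow> (\<exists>k<4. q = padd p (eps k))"

definition is_config :: "int \<Rightarrow> int \<Rightarrow> (int \<Rightarrow> pos) \<Rightarrow> bool" where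
  "is_config r s p \<longleftrightarrow>
     r \<le> 0 \<and> 0 \<le> s \<and> p 0 = (0,0) \<and>
     (\<forall>l. r \<le> l \<and> l < s \<longrightarrow> adjacent (p l) (p (l+1))) \<and>
     inj_on p {r..s} \<and>
     (\<forall>l m. l \<in> {r..s} \<and> m \<in> {r..s} \<and> \<bar>l - m\<bar> \<ge> 2 \<longrightarrow> \<not> adjacent (p l) (p m))"

definition bc :: "pos set \<Rightarrow> pos \<Rightarrow> bool list" where
  "bc S q = map (\<lambda>k. padd q (eps k) \<in> S) [0,1,2,3]"

text \<open>The sequence x0 p_i ... p_j x1, indexed so that p_l keeps index l.\<close>
definition ext_seq :: "(int \<Rightarrow> pos) \<Rightarrow> int \<Rightarrow> int \<Rightarrow> pos list \<Rightarrow> pos list \<Rightarrow> int \<Rightarrow> pos" where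
  "ext_seq p i j x0 x1 l =
     (if l < i then x0 ! nat (l - (i - int (length x0)))
      else if l \<le> j then p l
      else x1 ! nat (l - j - 1))"

definition Wset :: "int \<Rightarrow> int \<Rightarrow> (int \<Rightarrow> pos) \<Rightarrow> int \<Rightarrow> int \<Rightarrow> (pos list \<times> pos list) set" where
  "Wset r s p i j = {(x0, x1).
     let r' = i - int (length x0); s' = j + int (length x1); p' = ext_seq p i j x0 x1 in
     is_config r' s' p' \<and>
     (\<forall>l \<in> {i..j}. bc (p' ` {r'..s'}) (p l) = bc (p ` {r..s}) (p l))}"

definition Uset :: "int \<Rightarrow> int \<Rightarrow> (int \<Rightarrow> pos) \<Rightarrow> int \<Rightarrow> int \<Rightarrow> pos list set" where
  "Uset r s p i j = fst ` Wset r s p i j"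

definition Vset :: "int \<Rightarrow> int \<Rightarrow> (int \<Rightarrow> pos) \<Rightarrow> int \<Rightarrow> int \<Rightarrow> pos list set" where
  "Vset r s p i j = snd ` Wset r s p i j"

definition NI :: "int \<Rightarrow> int \<Rightarrow> (int \<Rightarrow> pos) \<Rightarrow> int \<Rightarrow> int \<Rightarrow> bool" where
  "NI r s p i j \<longleftrightarrow> Wset r s p i j = Uset r s p i j \<times> Vset r s p i j"

definition Iset :: "int \<Rightarrow> int \<Rightarrow> (int \<Rightarrow> pos) \<Rightarrow> (int \<times> int) set" where
  "Iset r s p = {(i,j). r \<le> i \<and> i \<le> 0 \<and> 0 \<le> j \<and> j \<le> s \<and> r \<le> i - 1 \<and>
      infinite (Wset r s p i j) \<and> finite (Wset r s p (i - 1) j)}"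

definition Jset :: "int \<Rightarrow> int \<Rightarrow> (int \<Rightarrow> pos) \<Rightarrow> (int \<times> int) set" where
  "Jset r s p = {(i,j). r \<le> i \<and> i \<le> 0 \<and> 0 \<le> j \<and> j \<le> s \<and> j + 1 \<le> s \<and>
      infinite (Wset r s p i j) \<and> finite (Wset r s p i (j + 1))}"

definition Kset :: "int \<Rightarrow> int \<Rightarrow> (int \<Rightarrow> pos) \<Rightarrow> (int \<times> int) set" where
  "Kset r s p = {(i,j). r \<le> i \<and> i \<le> 0 \<and> 0 \<le> j \<and> j \<le> s \<and> finite (Wset r s p i j)}"

definition CNI :: "int \<Rightarrow> int \<Rightarrow> (int \<Rightarrow> pos) \<Rightarrow> bool" where
  "CNI r s p \<longleftrightarrow> (\<forall>(i,j) \<in> Iset r s p \<union> Jset r s p \<union> Kset r s p. NI r s p i j)"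

end

theory Submission imports Defs begin

text \<open>
  Dropping p_i from the fixed segment moves it into the left extension, so
  V(i,j) \<subseteq> V(i+1,j). Conversely, C itself yields u = p_r..p_i in U(i+1,j).
  Since W(i,j) is finite, (i+1,j) lies in K or in I, so CNI gives NI(i+1,j) and u
  combines with every y in V(i+1,j). Since non-consecutive positions of a
  configuration are never adjacent, the boundary code of p_i only sees its
  predecessor and successor, which are the original ones; hence
  (p_r..p_(i-1), y) lies in W(i,j).
  The statement about U is the mirror image.
\<close>

lemma mem_Wset_iff:
  "(x0, x1) \<in> Wset r s p i j \<longleftrightarrow>
     is_config (i - int (length x0)) (j + int (length x1)) (ext_seq p i j x0 x1) \<and>
     (\<forall>l \<in> {i..j}. bc (ext_seq p i j x0 x1 ` {i - int (length x0)..j + int (length x1)}) (p l)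
                  = bc (p ` {r..s}) (p l))"
  unfolding Wset_def by (simp add: Let_def)

lemma is_config_cong:
  assumes "is_config r s p" and "\<And>l. l \<in> {r..s} \<Longrightarrow> q l = p l"
  shows "is_config r s q"
proof -
  have "inj_on q {r..s}"
    using assms inj_on_cong unfolding is_config_def by blast
  with assms show ?thesis
    unfolding is_config_def by (simp add: atLeastAtMost_iff)
qed

lemma padd_eps_neq: "k < 4 \<Longrightarrow> padd x (eps k) \<noteq> x"
  by (auto simp: padd_def eps_def prod_eq_iff)

lemma config_neighbour_iff:
  assumes "is_config r s p" "l \<in> {r..s}" "k < 4"
  shows "padd (p l) (eps k) \<in> p ` {r..s} \<longleftrightarrow>
         (\<exists>m \<in> {r..s} \<inter> {l-1..l+1}. p m = padd (p l) (eps k))"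
proof
  assume "padd (p l) (eps k) \<in> p ` {r..s}"
  then obtain m where m: "m \<in> {r..s}" "p m = padd (p l) (eps k)" by auto
  have "m \<noteq> l" using m padd_eps_neq[OF assms(3)] by metis
  moreover have "adjacent (p l) (p m)" using m assms(3) unfolding adjacent_def by auto
  then have "\<not> \<bar>l - m\<bar> \<ge> 2" using assms m unfolding is_config_def by blast
  ultimately show "\<exists>m \<in> {r..s} \<inter> {l-1..l+1}. p m = padd (p l) (eps k)"
    using m by (intro bexI[of _ m]) auto
qed (auto intro: image_eqI[OF sym])

lemma bc_config_local:
  assumes p: "is_config r s p" and q: "is_config r' s' q" and l: "l \<in> {r..s}"
    and window: "{r..s} \<inter> {l-1..l+1} = {r'..s'} \<inter> {l-1..l+1}"
    and agree: "\<And>m. m \<in> {r..s} \<inter> {l-1..l+1} \<Longrightarrow> q m = p m"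
  shows "bc (q ` {r'..s'}) (p l) = bc (p ` {r..s}) (p l)"
proof -
  have lw: "l \<in> {r..s} \<inter> {l-1..l+1}" using l by simp
  have l': "l \<in> {r'..s'}" and ql: "q l = p l"
    using lw window agree[OF lw] by auto
  have "padd (p l) (eps k) \<in> q ` {r'..s'} \<longleftrightarrow> padd (p l) (eps k) \<in> p ` {r..s}"
    if k: "k < 4" for k
    using config_neighbour_iff[OF q l' k] config_neighbour_iff[OF p l k] window agree ql
    by (metis (no_types, lifting))
  then show ?thesis unfolding bc_def by simp
qed

lemma ext_seq_drop_left:
  "i \<le> j \<Longrightarrow> i - int (length x0) \<le> l \<Longrightarrow>
   ext_seq p (i+1) j (x0 @ [p i]) x1 l = ext_seq p i j x0 x1 l"
  by (auto simp: ext_seq_def nth_append nat_diff_distrib)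

lemma ext_seq_drop_right:
  assumes "i \<le> j"
  shows "ext_seq p i (j-1) x0 (p j # x1) = ext_seq p i j x0 x1"
proof
  fix l
  have "l > j \<Longrightarrow> nat (l - (j - 1) - 1) = Suc (nat (l - j - 1))" by simp
  with assms show "ext_seq p i (j-1) x0 (p j # x1) l = ext_seq p i j x0 x1 l"
    by (auto simp: ext_seq_def)
qed

lemma ext_seq_prefix:
  "r \<le> l \<Longrightarrow> l \<le> j \<Longrightarrow> ext_seq p i j (map p [r..i-1]) x1 l = p l"
  by (auto simp: ext_seq_def)

lemma ext_seq_suffix:
  "i \<le> l \<Longrightarrow> l \<le> s \<Longrightarrow> ext_seq p i j x0 (map p [j+1..s]) l = p l"
  by (auto simp: ext_seq_def)

lemma Wset_self:
  assumes "is_config r s p" "r \<le> i" "i \<le> j" "j \<le> s"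
  shows "(map p [r..i-1], map p [j+1..s]) \<in> Wset r s p i j"
proof -
  let ?q = "ext_seq p i j (map p [r..i-1]) (map p [j+1..s])"
  have q: "?q l = p l" if "l \<in> {r..s}" for l
    using that assms ext_seq_prefix[of r l j p i] ext_seq_suffix[of i l s p j]
    by (cases "l \<le> j") auto
  then have "?q ` {r..s} = p ` {r..s}" by (rule image_cong[OF refl])
  with is_config_cong[OF assms(1) q] assms(2,4) show ?thesis
    unfolding mem_Wset_iff by simp
qed

lemma Wset_drop_left:
  assumes "(x0, x1) \<in> Wset r s p i j" "i + 1 \<le> j"
  shows "(x0 @ [p i], x1) \<in> Wset r s p (i+1) j"
proof -
  let ?a = "i - int (length x0)" and ?b = "j + int (length x1)"
  let ?q = "ext_seq p i j x0 x1" and ?q' = "ext_seq p (i+1) j (x0 @ [p i]) x1"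
  have q': "?q' l = ?q l" if "l \<in> {?a..?b}" for l
    using that assms(2) ext_seq_drop_left by simp
  then have "?q' ` {?a..?b} = ?q ` {?a..?b}" by (rule image_cong[OF refl])
  moreover have "i + 1 - int (length (x0 @ [p i])) = ?a" by simp
  ultimately show ?thesis
    using assms(1) is_config_cong[of ?a ?b ?q ?q'] q' unfolding mem_Wset_iff by auto
qed

lemma Wset_drop_right:
  assumes "(x0, x1) \<in> Wset r s p i j" "i \<le> j - 1"
  shows "(x0, p j # x1) \<in> Wset r s p i (j - 1)"
proof -
  have "j - 1 + int (length (p j # x1)) = j + int (length x1)" by simp
  moreover have "i \<le> j" using assms(2) by simp
  ultimately show ?thesis
    using assms(1) unfolding mem_Wset_iff ext_seq_drop_right[OF \<open>i \<le> j\<close>] by auto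
qed

lemma Wset_restore_left:
  assumes p: "is_config r s p" and "r \<le> i" "i + 1 \<le> j" "j \<le> s"
    and W: "(map p [r..i-1] @ [p i], x1) \<in> Wset r s p (i+1) j"
  shows "(map p [r..i-1], x1) \<in> Wset r s p i j"
proof -
  let ?x0 = "map p [r..i-1]" and ?b = "j + int (length x1)"
  let ?q = "ext_seq p i j ?x0 x1" and ?q' = "ext_seq p (i+1) j (?x0 @ [p i]) x1"
  have start: "i + 1 - int (length (?x0 @ [p i])) = r" "i - int (length ?x0) = r"
    using assms(2) by simp_all
  have q': "?q' l = ?q l" if "l \<in> {r..?b}" for l
    using that assms(2,3) ext_seq_drop_left[of i j ?x0] by simp
  then have im: "?q' ` {r..?b} = ?q ` {r..?b}" by (rule image_cong[OF refl])
  have c': "is_config r ?b ?q'"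
    and bc': "\<forall>l \<in> {i+1..j}. bc (?q' ` {r..?b}) (p l) = bc (p ` {r..s}) (p l)"
    using W unfolding mem_Wset_iff start by auto
  have c: "is_config r ?b ?q" using is_config_cong[OF c'] q' by simp
  have "bc (?q ` {r..?b}) (p i) = bc (p ` {r..s}) (p i)"
  proof (rule bc_config_local[OF p c])
    show "i \<in> {r..s}" "{r..s} \<inter> {i-1..i+1} = {r..?b} \<inter> {i-1..i+1}"
      using assms(2-4) by auto
    show "?q m = p m" if "m \<in> {r..s} \<inter> {i-1..i+1}" for m
      using that assms(3) ext_seq_prefix by simp
  qed
  then have "\<forall>l \<in> {i..j}. bc (?q ` {r..?b}) (p l) = bc (p ` {r..s}) (p l)"
    using bc' im by (metis atLeastAtMost_iff order.order_iff_strict zless_imp_add1_zle)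
  with c show ?thesis unfolding mem_Wset_iff start by simp
qed

lemma Wset_restore_right:
  assumes p: "is_config r s p" and "r \<le> i" "i \<le> j - 1" "j \<le> s"
    and W: "(x0, p j # map p [j+1..s]) \<in> Wset r s p i (j - 1)"
  shows "(x0, map p [j+1..s]) \<in> Wset r s p i j"
proof -
  let ?x1 = "map p [j+1..s]" and ?a = "i - int (length x0)"
  let ?q = "ext_seq p i j x0 ?x1"
  have stop: "j - 1 + int (length (p j # ?x1)) = s" "j + int (length ?x1) = s"
    using assms(3,4) by simp_all
  have "i \<le> j" using assms(3) by simp
  have c: "is_config ?a s ?q"
    and bc': "\<forall>l \<in> {i..j-1}. bc (?q ` {?a..s}) (p l) = bc (p ` {r..s}) (p l)"
    using W unfolding mem_Wset_iff stop ext_seq_drop_right[OF \<open>i \<le> j\<close>] by auto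
  have "bc (?q ` {?a..s}) (p j) = bc (p ` {r..s}) (p j)"
  proof (rule bc_config_local[OF p c])
    show "j \<in> {r..s}" "{r..s} \<inter> {j-1..j+1} = {?a..s} \<inter> {j-1..j+1}"
      using assms(2-4) by auto
    show "?q m = p m" if "m \<in> {r..s} \<inter> {j-1..j+1}" for m
      using that assms(3) ext_seq_suffix by simp
  qed
  then have "\<forall>l \<in> {i..j}. bc (?q ` {?a..s}) (p l) = bc (p ` {r..s}) (p l)"
    using bc' by (metis atLeastAtMost_iff order.order_iff_strict zle_diff1_eq)
  with c show ?thesis unfolding mem_Wset_iff stop by simp
qed

lemma Vset_drop_left_eq:
  assumes p: "is_config r s p" and "r \<le> i" "i + 1 \<le> j" "j \<le> s"
    and NI: "NI r s p (i+1) j"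
  shows "Vset r s p i j = Vset r s p (i+1) j"
proof
  show "Vset r s p i j \<subseteq> Vset r s p (i+1) j"
    using Wset_drop_left assms(3) unfolding Vset_def by (force intro: image_eqI)
  show "Vset r s p (i+1) j \<subseteq> Vset r s p i j"
  proof
    fix y assume y: "y \<in> Vset r s p (i+1) j"
    let ?u = "map p [r..i-1] @ [p i]"
    have "(?u, map p [j+1..s]) \<in> Wset r s p (i+1) j"
      using Wset_drop_left[OF Wset_self[OF p assms(2) _ assms(4)]] assms(3) by simp
    then have "?u \<in> Uset r s p (i+1) j" unfolding Uset_def by force
    with y NI have "(?u, y) \<in> Wset r s p (i+1) j" unfolding NI_def by blast
    then have "(map p [r..i-1], y) \<in> Wset r s p i j"
      using Wset_restore_left[OF p assms(2-4)] by blast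
    then show "y \<in> Vset r s p i j" unfolding Vset_def by force
  qed
qed

lemma Uset_drop_right_eq:
  assumes p: "is_config r s p" and "r \<le> i" "i \<le> j - 1" "j \<le> s"
    and NI: "NI r s p i (j - 1)"
  shows "Uset r s p i j = Uset r s p i (j - 1)"
proof
  show "Uset r s p i j \<subseteq> Uset r s p i (j - 1)"
    using Wset_drop_right assms(3) unfolding Uset_def by (force intro: image_eqI)
  show "Uset r s p i (j - 1) \<subseteq> Uset r s p i j"
  proof
    fix x assume x: "x \<in> Uset r s p i (j - 1)"
    let ?v = "p j # map p [j+1..s]"
    have "(map p [r..i-1], ?v) \<in> Wset r s p i (j - 1)"
      using Wset_drop_right[OF Wset_self[OF p assms(2) _ assms(4)]] assms(3) by simp
    then have "?v \<in> Vset r s p i (j - 1)" unfolding Vset_def by force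
    with x NI have "(x, ?v) \<in> Wset r s p i (j - 1)" unfolding NI_def by blast
    then have "(x, map p [j+1..s]) \<in> Wset r s p i j"
      using Wset_restore_right[OF p assms(2-4)] by blast
    then show "x \<in> Uset r s p i j" unfolding Uset_def by force
  qed
qed

lemma CNI_NI_drop_left:
  assumes "CNI r s p" "(i, j) \<in> Kset r s p" "i + 1 \<le> 0"
  shows "NI r s p (i+1) j"
proof -
  have "(i+1, j) \<in> Kset r s p \<union> Iset r s p"
    using assms(2,3) unfolding Kset_def Iset_def by auto
  with assms(1) show ?thesis unfolding CNI_def by blast
qed

lemma CNI_NI_drop_right:
  assumes "CNI r s p" "(i, j) \<in> Kset r s p" "0 \<le> j - 1"
  shows "NI r s p i (j - 1)"
proof -
  have "(i, j - 1) \<in> Kset r s p \<union> Jset r s p"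
    using assms(2,3) unfolding Kset_def Jset_def by auto
  with assms(1) show ?thesis unfolding CNI_def by blast
qed

theorem lemma6:
  fixes r s :: int and p :: "int \<Rightarrow> pos"
  assumes "is_config r s p"
    and "CNI r s p"
  shows "(\<forall>i j. (i,j) \<in> Kset r s p \<and> i + 1 \<le> 0 \<longrightarrow> Vset r s p i j = Vset r s p (i + 1) j)
       \<and> (\<forall>i j. (i,j) \<in> Kset r s p \<and> 0 \<le> j - 1 \<longrightarrow> Uset r s p i j = Uset r s p i (j - 1))"
proof (intro conjI allI impI)
  fix i j assume K: "(i,j) \<in> Kset r s p \<and> i + 1 \<le> 0"
  then have "r \<le> i" "i + 1 \<le> j" "j \<le> s" unfolding Kset_def by auto
  with K show "Vset r s p i j = Vset r s p (i + 1) j"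
    using Vset_drop_left_eq[OF assms(1)] CNI_NI_drop_left[OF assms(2)] by blast
next
  fix i j assume K: "(i,j) \<in> Kset r s p \<and> 0 \<le> j - 1"
  then have "r \<le> i" "i \<le> j - 1" "j \<le> s" unfolding Kset_def by auto
  with K show "Uset r s p i j = Uset r s p i (j - 1)"
    using Uset_drop_right_eq[OF assms(1)] CNI_NI_drop_right[OF assms(2)] by blast
qed

end
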